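(* Let $v\ge 1$, $\epsilon>0$, and let $z\in[0,1]^v$. Suppose we are given real values $\hat f_s$, one for each $s\in\{0,1\}^v$, satisfying $\left|\hat f_s-\frac1v\langle s,z\rangle\right|\le\epsilon$ for all $s\in\{0,1\}^v$. Then it is possible, using only the values $\{\hat f_s\}$, to identify a vector $\hat z\in[0,1]^v$ satisfying $\frac1v\|\hat z-z\|_1\le 4\epsilon$.
   Context: $\langle s,z\rangle=\sum_{i=1}^v s_iz_i$. In the paper $z=(f_T(\mathcal{D}_1),\dots,f_T(\mathcal{D}_v))$ is the vector of frequencies of a fixed itemset $T$ in $v$ databases, and $\hat f_s$ are approximate answers to associated itemset queries, but the statement only uses $z\in[0,1]^v$. *)

theory Defs
  imports Complex_Main
begin

(* A 0/1 vector s in {0,1}^v is represented by its support S \<subseteq> {..<v};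
   a real vector z in R^v by a function nat \<Rightarrow> real restricted to indices < v. *)
definition inner01 :: "nat set \<Rightarrow> (nat \<Rightarrow> real) \<Rightarrow> real" where
  "inner01 S z = (\<Sum>i\<in>S. z i)"

end

theory Submission
  imports Defs
begin

text \<open>Decode by choosing any vector in the cube that is consistent with all answers up to
  \<open>\<epsilon>\<close>; the true \<open>z\<close> is such a vector, so one exists. Two consistent vectors have
  subset sums within \<open>2\<epsilon>v\<close> of each other, and summing the difference over the coordinates
  where it is positive and over those where it is not bounds the \<open>\<ell>\<^sub>1\<close> distance
  by \<open>4\<epsilon>v\<close>.\<close>

lemma sum_abs_le_twice_subset_sum_bound:
  fixes d :: "'a \<Rightarrow> real"
  assumes "finite A" and bound: "\<And>S. S \<subseteq> A \<Longrightarrow> \<bar>\<Sum>i\<in>S. d i\<bar> \<le> B"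
  shows "(\<Sum>i\<in>A. \<bar>d i\<bar>) \<le> 2 * B"
proof -
  define P where "P = {i. d i > 0}"
  have "(\<Sum>i\<in>A. \<bar>d i\<bar>) = (\<Sum>i\<in>A \<inter> P. \<bar>d i\<bar>) + (\<Sum>i\<in>A - P. \<bar>d i\<bar>)"
    using \<open>finite A\<close> by (rule sum.Int_Diff)
  also have "(\<Sum>i\<in>A \<inter> P. \<bar>d i\<bar>) = (\<Sum>i\<in>A \<inter> P. d i)"
    by (rule sum.cong) (auto simp: P_def)
  also have "(\<Sum>i\<in>A - P. \<bar>d i\<bar>) = - (\<Sum>i\<in>A - P. d i)"
    unfolding sum_negf[symmetric] by (rule sum.cong) (auto simp: P_def)
  also have "(\<Sum>i\<in>A \<inter> P. d i) \<le> B" using bound[of "A \<inter> P"] by simp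
  also have "- (\<Sum>i\<in>A - P. d i) \<le> B" using bound[of "A - P"] by simp
  finally show ?thesis by simp
qed

definition consistent_with :: "nat \<Rightarrow> real \<Rightarrow> (nat set \<Rightarrow> real) \<Rightarrow> (nat \<Rightarrow> real) \<Rightarrow> bool" where
  "consistent_with v \<epsilon> fhat w \<longleftrightarrow> (\<forall>i<v. 0 \<le> w i \<and> w i \<le> 1) \<and>
     (\<forall>S. S \<subseteq> {..<v} \<longrightarrow> \<bar>fhat S - (1 / real v) * inner01 S w\<bar> \<le> \<epsilon>)"

lemma consistent_with_l1_close:
  assumes "v \<ge> 1" and w: "consistent_with v \<epsilon> fhat w" and z: "consistent_with v \<epsilon> fhat z"
  shows "(1 / real v) * (\<Sum>i<v. \<bar>w i - z i\<bar>) \<le> 4 * \<epsilon>"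
proof -
  have v_pos: "real v > 0" using \<open>v \<ge> 1\<close> by simp
  have "\<bar>\<Sum>i\<in>S. w i - z i\<bar> \<le> 2 * \<epsilon> * real v" if "S \<subseteq> {..<v}" for S
  proof -
    have "\<bar>fhat S - inner01 S w / real v\<bar> \<le> \<epsilon>" "\<bar>fhat S - inner01 S z / real v\<bar> \<le> \<epsilon>"
      using w z that by (auto simp: consistent_with_def)
    moreover have "\<bar>inner01 S w - inner01 S z\<bar> / real v
        = \<bar>inner01 S w / real v - inner01 S z / real v\<bar>"
      using v_pos by (simp add: abs_div_pos diff_divide_distrib)
    ultimately have "\<bar>inner01 S w - inner01 S z\<bar> / real v \<le> 2 * \<epsilon>"
      by linarith
    then have "\<bar>inner01 S w - inner01 S z\<bar> \<le> 2 * \<epsilon> * real v"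
      by (simp only: pos_divide_le_eq[OF v_pos])
    then show ?thesis by (simp add: inner01_def sum_subtractf)
  qed
  then have "(\<Sum>i<v. \<bar>w i - z i\<bar>) \<le> 2 * (2 * \<epsilon> * real v)"
    by (intro sum_abs_le_twice_subset_sum_bound) auto
  then have "(\<Sum>i<v. \<bar>w i - z i\<bar>) / real v \<le> 4 * \<epsilon>"
    using v_pos by (simp add: pos_divide_le_eq)
  then show ?thesis by simp
qed

theorem lemma4:
  fixes v :: nat and \<epsilon> :: real
  assumes "v \<ge> 1" and "\<epsilon> > 0"
  shows "\<exists>R :: (nat set \<Rightarrow> real) \<Rightarrow> (nat \<Rightarrow> real).
    \<forall>(z :: nat \<Rightarrow> real) (fhat :: nat set \<Rightarrow> real).
      (\<forall>i<v. 0 \<le> z i \<and> z i \<le> 1) \<and>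
      (\<forall>S. S \<subseteq> {..<v} \<longrightarrow> \<bar>fhat S - (1 / real v) * inner01 S z\<bar> \<le> \<epsilon>)
      \<longrightarrow> (\<forall>i<v. 0 \<le> R fhat i \<and> R fhat i \<le> 1) \<and>
          (1 / real v) * (\<Sum>i<v. \<bar>R fhat i - z i\<bar>) \<le> 4 * \<epsilon>"
proof (intro exI[of _ "\<lambda>fhat. SOME w. consistent_with v \<epsilon> fhat w"] allI impI)
  fix z :: "nat \<Rightarrow> real" and fhat :: "nat set \<Rightarrow> real"
  assume "(\<forall>i<v. 0 \<le> z i \<and> z i \<le> 1) \<and>
      (\<forall>S. S \<subseteq> {..<v} \<longrightarrow> \<bar>fhat S - (1 / real v) * inner01 S z\<bar> \<le> \<epsilon>)"
  then have z: "consistent_with v \<epsilon> fhat z" by (simp add: consistent_with_def)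
  define w where "w = (SOME w. consistent_with v \<epsilon> fhat w)"
  have w: "consistent_with v \<epsilon> fhat w"
    unfolding w_def using z by (rule someI[of "consistent_with v \<epsilon> fhat"])
  show "(\<forall>i<v. 0 \<le> w i \<and> w i \<le> 1) \<and> (1 / real v) * (\<Sum>i<v. \<bar>w i - z i\<bar>) \<le> 4 * \<epsilon>"
    using consistent_with_l1_close[OF \<open>v \<ge> 1\<close> w z] w by (simp add: consistent_with_def)
qed

end
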